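(* For every $\bar S\subset\bar M$, the sets $I^+_C(\bar S)$ and $I^-_C(\bar S)$ are open in the topology $\bar{\mathcal T}$ on $\bar M$.
   Context: Let $M$ be a strongly causal spacetime (a time-oriented Lorentzian manifold in which every point has a neighbourhood that no non-spacelike curve enters more than once). $I^\pm(p)$ denotes the chronological future/past of $p\in M$, and $I^\pm(S)=\bigcup_{s\in S}I^\pm(s)$. A past-set is a set $I^-(S)$ with $S\subset M$. An IP is a nonempty past-set that is not the union of two proper subsets which are past-sets. IFs are defined dually. For an IP $P$, $f(P)=I^+(\{x:P\subset I^-(x)\})$. For an IF $P^*$, $p(P^* )=I^-(\{x:P^*\subset I^+(x)\})$. $R_{pf}$ is the set of pairs $(P,Q^* )$ (with $P$ an IP and $Q^*$ an IF) such that both of the following hold: - $Q^*$ is a maximal IF (under inclusion) contained in $f(P)$; - $P$ is a maximal IP contained in $p(Q^* )$. $\bar M$ is the set of pairs $\bar P=(P,P^* )$ such that one of the following holds: - $(P,P^* )\in R_{pf}$; - $P=\emptyset$ and $P^*$ is an IF occurring in no pair of $R_{pf}$; - $P^*=\emptyset$ and $P$ is an IP occurring in no pair of $R_{pf}$. Chronology: $\bar P\ll_C\bar Q$ if and only if $P^*\cap Q\ne\emptyset$. For $\bar S\subset\bar M$, $I^+_C(\bar S)=\{\bar Q:\exists\bar P\in\bar S,\ \bar P\ll_C\bar Q\}$ and $I^-_C(\bar S)=\{\bar Q:\exists \bar P\in\bar S,\ \bar Q\ll_C\bar P\}$. Limits of sets: for past-sets $P_n$ and $Q$, $Q=\lim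 P_n$ means both of the following: - (i) each $x\in Q$ lies in $P_n$ for all sufficiently large $n$; - (ii) for each $x\in M$ with $I^-(x)\not\subset Q$, one has $I^-(x)\not\subset P_n$ for all sufficiently large $n$. Limits of future-sets are defined dually. For $\bar S\subset\bar M$ define: - $L^+_{IF}(\bar S)=\{\bar Q:Q^*\neq\emptyset,\ Q^*\subset\bigcup_{\bar P\in\bar S}P^*\}$; - $L^-_{IP}(\bar S)=\{\bar Q:Q\neq\emptyset,\ Q\subset\bigcup_{\bar P\in\bar S}P\}$; - $Cl_{FB}(\bar S)=\bar S\cup\{\bar Q:Q^*=\emptyset,\ Q=\lim P_n \text{ for some sequence }\bar P_n\in\bar S\}$; - $Cl_{PB}(\bar S)=\bar S\cup\{\bar Q:Q=\emptyset,\ Q^*=\lim P_n^*\text{ for some sequence }\bar P_n\in\bar S\}$; - $L^+(\bar S)=Cl_{FB}[\bar S\cup L^+_{IF}(\bar S)]$; - $L^-(\bar S)=Cl_{PB}[\bar S\cup L^-_{IP}(\bar S)]$. The topology $\bar{\mathcal T}$ on $\bar M$ is the coarsest topology in which $\bar M\setminus L^+(\bar S)$ and $\bar M\setminus L^-(\bar S)$ are open for every $\bar S\subset\bar M$. *)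

theory Defs
  imports "HOL-Analysis.Analysis"
begin

text \<open>Abstract rendering of a strongly causal spacetime: a Hausdorff topological
space (the manifold topology) with a chronology relation \<open>chr p q\<close> (p \<ll> q).\<close>

definition Ifut :: "('a \<Rightarrow> 'a \<Rightarrow> bool) \<Rightarrow> 'a set \<Rightarrow> 'a set" where
  "Ifut chr S = {y. \<exists>s\<in>S. chr s y}"

definition Ipast :: "('a \<Rightarrow> 'a \<Rightarrow> bool) \<Rightarrow> 'a set \<Rightarrow> 'a set" where
  "Ipast chr S = {y. \<exists>s\<in>S. chr y s}"

definition strongly_causal_chronology :: "('a::topological_space \<Rightarrow> 'a \<Rightarrow> bool) \<Rightarrow> bool" where
  "strongly_causal_chronology chr \<longleftrightarrow>
     transp chr \<and> irreflp chr \<and>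
     (\<forall>p. open (Ifut chr {p}) \<and> open (Ipast chr {p})) \<and>
     (\<forall>U x. open U \<and> x \<in> U \<longrightarrow>
        (\<exists>p q. x \<in> Ifut chr {p} \<inter> Ipast chr {q} \<and> Ifut chr {p} \<inter> Ipast chr {q} \<subseteq> U))"

definition past_set :: "('a \<Rightarrow> 'a \<Rightarrow> bool) \<Rightarrow> 'a set \<Rightarrow> bool" where
  "past_set chr A \<longleftrightarrow> (\<exists>S. A = Ipast chr S)"

definition future_set :: "('a \<Rightarrow> 'a \<Rightarrow> bool) \<Rightarrow> 'a set \<Rightarrow> bool" where
  "future_set chr A \<longleftrightarrow> (\<exists>S. A = Ifut chr S)"

definition IP :: "('a \<Rightarrow> 'a \<Rightarrow> bool) \<Rightarrow> 'a set \<Rightarrow> bool" where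
  "IP chr P \<longleftrightarrow> P \<noteq> {} \<and> past_set chr P \<and>
     \<not> (\<exists>A B. past_set chr A \<and> past_set chr B \<and> A \<subset> P \<and> B \<subset> P \<and> P = A \<union> B)"

definition IF :: "('a \<Rightarrow> 'a \<Rightarrow> bool) \<Rightarrow> 'a set \<Rightarrow> bool" where
  "IF chr F \<longleftrightarrow> F \<noteq> {} \<and> future_set chr F \<and>
     \<not> (\<exists>A B. future_set chr A \<and> future_set chr B \<and> A \<subset> F \<and> B \<subset> F \<and> F = A \<union> B)"

definition fut_of :: "('a \<Rightarrow> 'a \<Rightarrow> bool) \<Rightarrow> 'a set \<Rightarrow> 'a set" where
  "fut_of chr P = Ifut chr {x. P \<subseteq> Ipast chr {x}}"

definition past_of :: "('a \<Rightarrow> 'a \<Rightarrow> bool) \<Rightarrow> 'a set \<Rightarrow> 'a set" where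
  "past_of chr F = Ipast chr {x. F \<subseteq> Ifut chr {x}}"

definition R_pf :: "('a \<Rightarrow> 'a \<Rightarrow> bool) \<Rightarrow> ('a set \<times> 'a set) set" where
  "R_pf chr = {(P, Q). IP chr P \<and> IF chr Q \<and>
     (Q \<subseteq> fut_of chr P \<and> (\<forall>Q'. IF chr Q' \<and> Q' \<subseteq> fut_of chr P \<and> Q \<subseteq> Q' \<longrightarrow> Q' = Q)) \<and>
     (P \<subseteq> past_of chr Q \<and> (\<forall>P'. IP chr P' \<and> P' \<subseteq> past_of chr Q \<and> P \<subseteq> P' \<longrightarrow> P' = P))}"

definition Mbar :: "('a \<Rightarrow> 'a \<Rightarrow> bool) \<Rightarrow> ('a set \<times> 'a set) set" where
  "Mbar chr = R_pf chr
     \<union> {({}, F) | F. IF chr F \<and> \<not> (\<exists>P. (P, F) \<in> R_pf chr)}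
     \<union> {(P, {}) | P. IP chr P \<and> \<not> (\<exists>F. (P, F) \<in> R_pf chr)}"

definition chrC :: "('a set \<times> 'a set) \<Rightarrow> ('a set \<times> 'a set) \<Rightarrow> bool" where
  "chrC Pb Qb \<longleftrightarrow> snd Pb \<inter> fst Qb \<noteq> {}"

definition IfutC :: "('a \<Rightarrow> 'a \<Rightarrow> bool) \<Rightarrow> ('a set \<times> 'a set) set \<Rightarrow> ('a set \<times> 'a set) set" where
  "IfutC chr S = {Qb \<in> Mbar chr. \<exists>Pb\<in>S. chrC Pb Qb}"

definition IpastC :: "('a \<Rightarrow> 'a \<Rightarrow> bool) \<Rightarrow> ('a set \<times> 'a set) set \<Rightarrow> ('a set \<times> 'a set) set" where
  "IpastC chr S = {Qb \<in> Mbar chr. \<exists>Pb\<in>S. chrC Qb Pb}"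

definition lim_past :: "('a \<Rightarrow> 'a \<Rightarrow> bool) \<Rightarrow> (nat \<Rightarrow> 'a set) \<Rightarrow> 'a set \<Rightarrow> bool" where
  "lim_past chr Ps Q \<longleftrightarrow>
     (\<forall>x\<in>Q. \<forall>\<^sub>F n in sequentially. x \<in> Ps n) \<and>
     (\<forall>x. \<not> Ipast chr {x} \<subseteq> Q \<longrightarrow> (\<forall>\<^sub>F n in sequentially. \<not> Ipast chr {x} \<subseteq> Ps n))"

definition lim_fut :: "('a \<Rightarrow> 'a \<Rightarrow> bool) \<Rightarrow> (nat \<Rightarrow> 'a set) \<Rightarrow> 'a set \<Rightarrow> bool" where
  "lim_fut chr Fs Q \<longleftrightarrow>
     (\<forall>x\<in>Q. \<forall>\<^sub>F n in sequentially. x \<in> Fs n) \<and>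
     (\<forall>x. \<not> Ifut chr {x} \<subseteq> Q \<longrightarrow> (\<forall>\<^sub>F n in sequentially. \<not> Ifut chr {x} \<subseteq> Fs n))"

definition L_IF :: "('a \<Rightarrow> 'a \<Rightarrow> bool) \<Rightarrow> ('a set \<times> 'a set) set \<Rightarrow> ('a set \<times> 'a set) set" where
  "L_IF chr S = {Qb \<in> Mbar chr. snd Qb \<noteq> {} \<and> snd Qb \<subseteq> (\<Union>Pb\<in>S. snd Pb)}"

definition L_IP :: "('a \<Rightarrow> 'a \<Rightarrow> bool) \<Rightarrow> ('a set \<times> 'a set) set \<Rightarrow> ('a set \<times> 'a set) set" where
  "L_IP chr S = {Qb \<in> Mbar chr. fst Qb \<noteq> {} \<and> fst Qb \<subseteq> (\<Union>Pb\<in>S. fst Pb)}"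

definition Cl_FB :: "('a \<Rightarrow> 'a \<Rightarrow> bool) \<Rightarrow> ('a set \<times> 'a set) set \<Rightarrow> ('a set \<times> 'a set) set" where
  "Cl_FB chr S = S \<union> {Qb \<in> Mbar chr. snd Qb = {} \<and>
     (\<exists>Pbs. (\<forall>n. Pbs n \<in> S) \<and> lim_past chr (\<lambda>n. fst (Pbs n)) (fst Qb))}"

definition Cl_PB :: "('a \<Rightarrow> 'a \<Rightarrow> bool) \<Rightarrow> ('a set \<times> 'a set) set \<Rightarrow> ('a set \<times> 'a set) set" where
  "Cl_PB chr S = S \<union> {Qb \<in> Mbar chr. fst Qb = {} \<and>
     (\<exists>Pbs. (\<forall>n. Pbs n \<in> S) \<and> lim_fut chr (\<lambda>n. snd (Pbs n)) (snd Qb))}"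

definition Lplus :: "('a \<Rightarrow> 'a \<Rightarrow> bool) \<Rightarrow> ('a set \<times> 'a set) set \<Rightarrow> ('a set \<times> 'a set) set" where
  "Lplus chr S = Cl_FB chr (S \<union> L_IF chr S)"

definition Lminus :: "('a \<Rightarrow> 'a \<Rightarrow> bool) \<Rightarrow> ('a set \<times> 'a set) set \<Rightarrow> ('a set \<times> 'a set) set" where
  "Lminus chr S = Cl_PB chr (S \<union> L_IP chr S)"

definition Mbar_topology :: "('a \<Rightarrow> 'a \<Rightarrow> bool) \<Rightarrow> ('a set \<times> 'a set) topology" where
  "Mbar_topology chr = topology_generated_by
     ({Mbar chr - Lplus chr S | S. S \<subseteq> Mbar chr} \<union> {Mbar chr - Lminus chr S | S. S \<subseteq> Mbar chr})"

end

theory Submission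
  imports Defs
begin

text \<open>The complement of \<open>I\<^sup>+\<^sub>C(S)\<close> in \<open>M\<close>-bar is the set of points whose past
component misses every future component of a point of \<open>S\<close>. That set is a fixed
point of \<open>L\<^sup>-\<close>: \<open>L\<^sup>-\<^sub>I\<^sub>P\<close> only adds points whose past lies inside pasts that already miss
those future components, and \<open>Cl\<^sub>P\<^sub>B\<close> only adds points with empty past. So
\<open>I\<^sup>+\<^sub>C(S)\<close> is one of the subbasic open sets, and dually for \<open>I\<^sup>-\<^sub>C(S)\<close>.\<close>

lemma Lminus_past_avoiding:
  "Lminus chr {Qb \<in> Mbar chr. fst Qb \<inter> A = {}} = {Qb \<in> Mbar chr. fst Qb \<inter> A = {}}"
  (is "Lminus chr ?T = ?T")
proof -
  have "L_IP chr ?T \<subseteq> ?T"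
    unfolding L_IP_def by blast
  moreover have "Cl_PB chr ?T = ?T"
    unfolding Cl_PB_def by auto
  ultimately show ?thesis
    unfolding Lminus_def by (simp add: Un_absorb2)
qed

lemma Lplus_future_avoiding:
  "Lplus chr {Qb \<in> Mbar chr. snd Qb \<inter> A = {}} = {Qb \<in> Mbar chr. snd Qb \<inter> A = {}}"
  (is "Lplus chr ?T = ?T")
proof -
  have "L_IF chr ?T \<subseteq> ?T"
    unfolding L_IF_def by blast
  moreover have "Cl_FB chr ?T = ?T"
    unfolding Cl_FB_def by auto
  ultimately show ?thesis
    unfolding Lplus_def by (simp add: Un_absorb2)
qed

lemma openin_Mbar_topology_diff_Lminus:
  "S \<subseteq> Mbar chr \<Longrightarrow> openin (Mbar_topology chr) (Mbar chr - Lminus chr S)"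
  unfolding Mbar_topology_def openin_topology_generated_by_iff
  by (blast intro: generate_topology_on.Basis)

lemma openin_Mbar_topology_diff_Lplus:
  "S \<subseteq> Mbar chr \<Longrightarrow> openin (Mbar_topology chr) (Mbar chr - Lplus chr S)"
  unfolding Mbar_topology_def openin_topology_generated_by_iff
  by (blast intro: generate_topology_on.Basis)

lemma IfutC_eq_diff_past_avoiding:
  "IfutC chr S = Mbar chr - {Qb \<in> Mbar chr. fst Qb \<inter> (\<Union>Pb\<in>S. snd Pb) = {}}"
  unfolding IfutC_def chrC_def by blast

lemma IpastC_eq_diff_future_avoiding:
  "IpastC chr S = Mbar chr - {Qb \<in> Mbar chr. snd Qb \<inter> (\<Union>Pb\<in>S. fst Pb) = {}}"
  unfolding IpastC_def chrC_def by blast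

theorem lemma3:
  fixes chr :: "'a::t2_space \<Rightarrow> 'a \<Rightarrow> bool"
    and S :: "('a set \<times> 'a set) set"
  assumes "strongly_causal_chronology chr"
    and "S \<subseteq> Mbar chr"
  shows "openin (Mbar_topology chr) (IfutC chr S) \<and> openin (Mbar_topology chr) (IpastC chr S)"
proof
  let ?Tfut = "{Qb \<in> Mbar chr. fst Qb \<inter> (\<Union>Pb\<in>S. snd Pb) = {}}"
  have "IfutC chr S = Mbar chr - Lminus chr ?Tfut"
    by (simp add: IfutC_eq_diff_past_avoiding Lminus_past_avoiding)
  then show "openin (Mbar_topology chr) (IfutC chr S)"
    by (simp add: openin_Mbar_topology_diff_Lminus)
  let ?Tpast = "{Qb \<in> Mbar chr. snd Qb \<inter> (\<Union>Pb\<in>S. fst Pb) = {}}"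
  have "IpastC chr S = Mbar chr - Lplus chr ?Tpast"
    by (simp add: IpastC_eq_diff_future_avoiding Lplus_future_avoiding)
  then show "openin (Mbar_topology chr) (IpastC chr S)"
    by (simp add: openin_Mbar_topology_diff_Lplus)
qed

end
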